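(* Let $X^u$, $u=1,\dots,\dim\mathfrak g$, be a basis of $\mathfrak g$, and for every $u$, every $s\in\{1,\dots,N\}$ and every $m\in\mathbb Z$ fix any element $X^u_{m,s}\in\overline{\mathfrak g}$ with $X^u_{m,s}(z_p)=\delta^s_pX^uz_p^m+O(z_p^{m+1})$ for all $p=1,\dots,N$. Then: (a) the elements $X^u_{m,s}$ ($u=1,\dots,\dim\mathfrak g$, $s=1,\dots,N$, $m\in\mathbb Z$) are linearly independent; (b) for each $m$, the classes $[X^u_{m,s}]$, $u=1,\dots,\dim\mathfrak g$, $s=1,\dots,N$, form a basis of the quotient $\overline{\mathfrak g}'_{(m)}/\overline{\mathfrak g}'_{(m+1)}$; (c) $\dim\overline{\mathfrak g}'_{(m)}/\overline{\mathfrak g}'_{(m+1)}=N\cdot\dim\mathfrak g$; (d) the classes $[X^u_{m,s}]$ do not depend on the choice of the elements $X^u_{m,s}$.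
   Context: Let $\Sigma$ be a compact Riemann surface of genus $g$ and $A\subset\Sigma$ a finite set split into two disjoint non-empty subsets $I=\{P_1,\dots,P_N\}$ and $O=\{Q_1,\dots,Q_M\}$. Let $\mathfrak g$ be one of the complex matrix Lie algebras $\mathfrak{gl}(n)$, $\mathfrak{sl}(n)$, $\mathfrak{so}(n)$, or $\mathfrak{sp}(2n)=\{X: X^t\sigma+\sigma X=0\}$ for a fixed non-degenerate skew-symmetric matrix $\sigma$. Tyurin data: an integer $K\ge 0$, distinct points $\gamma_1,\dots,\gamma_K\in\Sigma\setminus A$ (the set $W$) and vectors $\alpha_s\in\mathbb C^n$ ($\mathbb C^{2n}$ for $\mathfrak{sp}$), with $\alpha_s^t\alpha_s=0$ in the $\mathfrak{so}$ case. Fix local coordinates $w_s$ centred at $\gamma_s$ and $z_p$ centred at $P_p$. The Lax operator algebra $\overline{\mathfrak g}$ is the set of meromorphic maps $L:\Sigma\to\mathfrak g$, holomorphic on $\Sigma\setminus(A\cup W)$, such that for each $s$: ($\mathfrak{gl}$) $L=L_{s,-1}w_s^{-1}+\sum_{k\ge0}L_{s,k}w_s^k$ near $\gamma_s$ with $\beta_s\in\mathbb C^n,\kappa_s\in\mathbb C$ such that $L_{s,-1}=\alpha_s\beta_s^t$, $\beta_s^t\alpha_s=0$, $L_{s,0}\alpha_s=\kappa_s\alpha_s$; ($\mathfrak{sl}$) the same with all $L_{s,k}$ traceless; ($\mathfrak{so}$) the same expansion with all $L_{s,k}$ skew-symmetric, $L_{s,-1}=\alpha_s\beta_s^t-\beta_s\alpha_s^t$,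 $\beta_s^t\alpha_s=0$, $L_{s,0}\alpha_s=\kappa_s\alpha_s$; ($\mathfrak{sp}$) $L=L_{s,-2}w_s^{-2}+L_{s,-1}w_s^{-1}+\sum_{k\ge0}L_{s,k}w_s^k$ with $\beta_s,\nu_s,\kappa_s$ such that $L_{s,-2}=\nu_s\alpha_s\alpha_s^t\sigma$, $L_{s,-1}=(\alpha_s\beta_s^t+\beta_s\alpha_s^t)\sigma$, $\beta_s^t\sigma\alpha_s=0$, $L_{s,0}\alpha_s=\kappa_s\alpha_s$, $\alpha_s^t\sigma L_{s,1}\alpha_s=0$. It is a Lie algebra under the pointwise commutator. For a matrix-valued meromorphic $L$ and a point $P$, $\mathrm{ord}_P(L)$ is the minimum of the orders at $P$ of the entries of $L$. Set $\overline{\mathfrak g}'_{(m)}:=\{L\in\overline{\mathfrak g}:\ \mathrm{ord}_{P_s}(L)\ge m \text{ for all } s=1,\dots,N\}$. (Such elements $X^u_{m,s}$ always exist.) *)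

theory Defs
  imports "HOL-Complex_Analysis.Complex_Analysis"
begin

no_notation fps_nth (infixl \<open>$\<close> 75)

type_synonym 'n cmat = "complex^'n^'n"

definition msc :: "complex \<Rightarrow> 'n::finite cmat \<Rightarrow> 'n::finite cmat" where
  "msc c M = (\<chi> i j. c * M $ i $ j)"

definition outer :: "complex^'n::finite \<Rightarrow> complex^'n::finite \<Rightarrow> 'n::finite cmat" where
  "outer a b = (\<chi> i j. a $ i * b $ j)"

definition bil :: "complex^'n::finite \<Rightarrow> complex^'n::finite \<Rightarrow> complex" where
  "bil a b = (\<Sum>i\<in>UNIV. a $ i * b $ i)"

datatype 'n liekind = GL | SL | SO | SP "'n::finite cmat"

fun lie_alg :: "'n::finite liekind \<Rightarrow> 'n::finite cmat set" where
  "lie_alg GL = UNIV"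
| "lie_alg SL = {X. trace X = 0}"
| "lie_alg SO = {X. transpose X = - X}"
| "lie_alg (SP \<sigma>) = {X. transpose X ** \<sigma> + \<sigma> ** X = 0}"

definition is_chart :: "'a::topological_space set \<Rightarrow> ('a \<Rightarrow> complex) \<Rightarrow> bool" where
  "is_chart U \<phi> \<longleftrightarrow> open U \<and> inj_on \<phi> U \<and> open (\<phi> ` U) \<and>
      homeomorphism U (\<phi> ` U) \<phi> (inv_into U \<phi>)"

definition chart_compat ::
  "'a set \<Rightarrow> ('a \<Rightarrow> complex) \<Rightarrow> 'a set \<Rightarrow> ('a \<Rightarrow> complex) \<Rightarrow> bool" where
  "chart_compat U \<phi> V \<psi> \<longleftrightarrow>
     (\<psi> \<circ> inv_into U \<phi>) holomorphic_on (\<phi> ` (U \<inter> V)) \<and>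
     (\<phi> \<circ> inv_into V \<psi>) holomorphic_on (\<psi> ` (U \<inter> V))"

definition compact_riemann_surface :: "('a::t2_space set \<times> ('a \<Rightarrow> complex)) set \<Rightarrow> bool" where
  "compact_riemann_surface atlas \<longleftrightarrow>
     (\<forall>(U,\<phi>)\<in>atlas. is_chart U \<phi>) \<and> (\<Union>(fst ` atlas) = UNIV) \<and>
     (\<forall>(U,\<phi>)\<in>atlas. \<forall>(V,\<psi>)\<in>atlas. chart_compat U \<phi> V \<psi>) \<and>
     compact (UNIV :: 'a set) \<and> connected (UNIV :: 'a set)"

definition local_coord ::
  "('a::topological_space set \<times> ('a \<Rightarrow> complex)) set \<Rightarrow> 'a set \<Rightarrow> ('a \<Rightarrow> complex) \<Rightarrow> 'a \<Rightarrow> bool" where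
  "local_coord atlas U \<phi> P \<longleftrightarrow> is_chart U \<phi> \<and> P \<in> U \<and> \<phi> P = 0 \<and>
     (\<forall>(V,\<psi>)\<in>atlas. chart_compat U \<phi> V \<psi>)"

definition in_chart :: "'a set \<Rightarrow> ('a \<Rightarrow> complex) \<Rightarrow> ('a \<Rightarrow> 'b) \<Rightarrow> complex \<Rightarrow> 'b" where
  "in_chart U \<phi> L = (\<lambda>\<zeta>. L (inv_into U \<phi> \<zeta>))"

definition mat_holo_on :: "(complex \<Rightarrow> 'n::finite cmat) \<Rightarrow> complex set \<Rightarrow> bool" where
  "mat_holo_on F S \<longleftrightarrow> (\<forall>i j. (\<lambda>\<zeta>. F \<zeta> $ i $ j) holomorphic_on S)"

definition merom_off ::
  "('a::topological_space set \<times> ('a \<Rightarrow> complex)) set \<Rightarrow> 'a set \<Rightarrow> ('a \<Rightarrow> 'n::finite cmat) \<Rightarrow> bool" where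
  "merom_off atlas S L \<longleftrightarrow>
     (\<forall>(V,\<psi>)\<in>atlas. mat_holo_on (in_chart V \<psi> L) (\<psi> ` (V - S))) \<and>
     (\<forall>(V,\<psi>)\<in>atlas. \<forall>x\<in>V \<inter> S. \<forall>i j.
         not_essential (\<lambda>\<zeta>. in_chart V \<psi> L \<zeta> $ i $ j) (\<psi> x))"

definition ord_ge ::
  "'a set \<Rightarrow> ('a \<Rightarrow> complex) \<Rightarrow> ('a \<Rightarrow> 'n::finite cmat) \<Rightarrow> int \<Rightarrow> bool" where
  "ord_ge U \<phi> L m \<longleftrightarrow> (\<forall>i j. \<exists>r>0. ball 0 r \<subseteq> \<phi> ` U \<and>
     (\<exists>h. h holomorphic_on ball 0 r \<and>
        (\<forall>\<zeta>\<in>ball 0 r - {0}. in_chart U \<phi> L \<zeta> $ i $ j = \<zeta> powi m * h \<zeta>)))"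

fun tyurin_cond :: "'n::finite liekind \<Rightarrow> 'a set \<Rightarrow> ('a \<Rightarrow> complex) \<Rightarrow> complex^'n::finite
    \<Rightarrow> ('a \<Rightarrow> 'n::finite cmat) \<Rightarrow> bool" where
  "tyurin_cond GL U w a L = (\<exists>r>0. ball 0 r \<subseteq> w ` U \<and> (\<exists>b \<kappa> H. mat_holo_on H (ball 0 r) \<and>
      (\<forall>\<zeta>\<in>ball 0 r - {0}. in_chart U w L \<zeta> = msc (1/\<zeta>) (outer a b) + H \<zeta>) \<and>
      bil b a = 0 \<and> H 0 *v a = \<kappa> *s a))"
| "tyurin_cond SL U w a L = (\<exists>r>0. ball 0 r \<subseteq> w ` U \<and> (\<exists>b \<kappa> H. mat_holo_on H (ball 0 r) \<and>
      (\<forall>\<zeta>\<in>ball 0 r - {0}. in_chart U w L \<zeta> = msc (1/\<zeta>) (outer a b) + H \<zeta>) \<and>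
      bil b a = 0 \<and> H 0 *v a = \<kappa> *s a))"
| "tyurin_cond SO U w a L = (\<exists>r>0. ball 0 r \<subseteq> w ` U \<and> (\<exists>b \<kappa> H. mat_holo_on H (ball 0 r) \<and>
      (\<forall>\<zeta>\<in>ball 0 r - {0}. in_chart U w L \<zeta> = msc (1/\<zeta>) (outer a b - outer b a) + H \<zeta>) \<and>
      bil b a = 0 \<and> H 0 *v a = \<kappa> *s a))"
| "tyurin_cond (SP \<sigma>) U w a L = (\<exists>r>0. ball 0 r \<subseteq> w ` U \<and> (\<exists>b \<nu> \<kappa> H. mat_holo_on H (ball 0 r) \<and>
      (\<forall>\<zeta>\<in>ball 0 r - {0}. in_chart U w L \<zeta> =
          msc (1/\<zeta>^2) (msc \<nu> (outer a a ** \<sigma>)) + msc (1/\<zeta>) ((outer a b + outer b a) ** \<sigma>) + H \<zeta>) \<and>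
      bil b (\<sigma> *v a) = 0 \<and> H 0 *v a = \<kappa> *s a \<and>
      bil a (\<sigma> *v ((\<chi> i j. deriv (\<lambda>\<zeta>. H \<zeta> $ i $ j) 0) *v a)) = 0))"

text \<open>The Lax operator algebra. Convention: elements take the junk value 0 on A \<union> W,
  so that equality of meromorphic maps is equality of HOL functions.\<close>
definition lax_alg ::
  "('a::t2_space set \<times> ('a \<Rightarrow> complex)) set \<Rightarrow> 'n::finite liekind \<Rightarrow> 'a set
   \<Rightarrow> nat \<Rightarrow> (nat \<Rightarrow> 'a) \<Rightarrow> (nat \<Rightarrow> 'a set) \<Rightarrow> (nat \<Rightarrow> 'a \<Rightarrow> complex) \<Rightarrow> (nat \<Rightarrow> complex^'n::finite)
   \<Rightarrow> ('a \<Rightarrow> 'n::finite cmat) set" where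
  "lax_alg atlas kind A K \<gamma> wU w \<alpha> =
    {L. (\<forall>x. x \<notin> A \<union> \<gamma> ` {1..K} \<longrightarrow> L x \<in> lie_alg kind) \<and>
        (\<forall>x\<in>A \<union> \<gamma> ` {1..K}. L x = 0) \<and>
        merom_off atlas (A \<union> \<gamma> ` {1..K}) L \<and>
        (\<forall>s\<in>{1..K}. tyurin_cond kind (wU s) (w s) (\<alpha> s) L)}"

definition filt ::
  "('a \<Rightarrow> 'n::finite cmat) set \<Rightarrow> nat \<Rightarrow> (nat \<Rightarrow> 'a set) \<Rightarrow> (nat \<Rightarrow> 'a \<Rightarrow> complex) \<Rightarrow> int
   \<Rightarrow> ('a \<Rightarrow> 'n::finite cmat) set" where
  "filt G N zU z m = {L \<in> G. \<forall>p\<in>{1..N}. ord_ge (zU p) (z p) L m}"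

definition quot_basis_fam ::
  "('a \<Rightarrow> 'n::finite cmat) set \<Rightarrow> ('a \<Rightarrow> 'n::finite cmat) set \<Rightarrow> 'i set \<Rightarrow> ('i \<Rightarrow> 'a \<Rightarrow> 'n::finite cmat) \<Rightarrow> bool" where
  "quot_basis_fam V W I b \<longleftrightarrow>
     (\<forall>i\<in>I. b i \<in> V) \<and>
     (\<forall>F c. finite F \<longrightarrow> F \<subseteq> I \<longrightarrow> (\<lambda>x. \<Sum>i\<in>F. msc (c i) (b i x)) \<in> W \<longrightarrow> (\<forall>i\<in>F. c i = 0)) \<and>
     (\<forall>L\<in>V. \<exists>F c. finite F \<and> F \<subseteq> I \<and> (\<lambda>x. L x - (\<Sum>i\<in>F. msc (c i) (b i x))) \<in> W)"

end

theory Submission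
  imports Defs "HOL-Library.Function_Algebras"
begin

text \<open>For L in the filtration step of order m, the coefficient of z_p^m in the expansion of L at P_p
  exists and is a limit of values of L, hence lies in the (closed) Lie algebra. The tuple of these
  leading coefficients is a linear map to the N-fold product of the Lie algebra whose kernel is the
  next filtration step. The normalisation of X^u_{m,s} says exactly that it is sent to the standard
  basis element X^u at P_s, so the map induces an isomorphism of the quotient with the product: this
  gives (b), (c) and (d). For (a), a vanishing linear combination is looked at in its lowest order,
  where only the leading parts of the lowest-order terms survive.\<close>

lemma msc_nth [simp]: "msc c M $ i $ j = c * M $ i $ j"
  by (simp add: msc_def)

lemma msc_zero [simp]: "msc c 0 = 0"
  and msc_zero_left [simp]: "msc 0 M = 0"
  and msc_one [simp]: "msc 1 M = M"
  and msc_minus_one [simp]: "msc (-1) M = - M"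
  and msc_msc [simp]: "msc c (msc c' M) = msc (c * c') M"
  by (simp_all add: vec_eq_iff)

lemma msc_add: "msc c (M + M') = msc c M + msc c M'"
  and msc_add_left: "msc (c + c') M = msc c M + msc c' M"
  by (simp_all add: vec_eq_iff algebra_simps)

lemma msc_matrix_mult_left: "msc c A ** B = msc c (A ** B)"
  by (simp add: vec_eq_iff matrix_matrix_mult_def sum_distrib_left algebra_simps)

lemma msc_matrix_mult_right: "A ** msc c B = msc c (A ** B)"
  by (simp add: vec_eq_iff matrix_matrix_mult_def sum_distrib_left algebra_simps)

lemma transpose_msc: "transpose (msc c A) = msc c (transpose A)"
  by (simp add: vec_eq_iff transpose_def)

lemma transpose_add_cmat: "transpose (A + B) = transpose A + transpose (B :: 'n::finite cmat)"
  by (simp add: vec_eq_iff transpose_def)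

lemma matrix_add_rdistrib_cmat: "(A + B) ** C = A ** C + B ** (C :: 'n::finite cmat)"
  by (simp add: vec_eq_iff matrix_matrix_mult_def algebra_simps sum.distrib)

lemma lie_alg_zero: "0 \<in> lie_alg kind"
  by (cases kind) (auto simp: trace_def transpose_def vec_eq_iff matrix_matrix_mult_def)

lemma lie_alg_lincomb:
  assumes "X \<in> lie_alg kind" "Y \<in> lie_alg kind"
  shows "msc c1 X + msc c2 Y \<in> lie_alg kind"
proof (cases kind)
  case SL
  then show ?thesis using assms by (simp add: trace_def sum.distrib flip: sum_distrib_left)
next
  case SO
  then show ?thesis using assms by (simp add: transpose_add_cmat transpose_msc vec_eq_iff)
next
  case (SP \<sigma>)
  have "transpose (msc c1 X + msc c2 Y) ** \<sigma> + \<sigma> ** (msc c1 X + msc c2 Y) =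
      msc c1 (transpose X ** \<sigma> + \<sigma> ** X) + msc c2 (transpose Y ** \<sigma> + \<sigma> ** Y)"
    by (simp only: transpose_add_cmat transpose_msc msc_matrix_mult_left msc_matrix_mult_right
        matrix_add_rdistrib_cmat matrix_add_ldistrib msc_add add_ac)
  then show ?thesis using assms SP by simp
qed simp

lemma closed_lie_alg: "closed (lie_alg kind)"
proof (rule closed_subspace, unfold subspace_def, intro conjI ballI allI)
  have "(r *\<^sub>R X) $ i $ j = msc (complex_of_real r) X $ i $ j" for r and X :: "'a::finite cmat" and i j
    by (simp add: scaleR_conv_of_real[where 'a=complex])
  then have scaleR_eq: "r *\<^sub>R X = msc (complex_of_real r) X" for r and X :: "'a::finite cmat"
    by (simp add: vec_eq_iff)
  show "x + y \<in> lie_alg kind" if "x \<in> lie_alg kind" "y \<in> lie_alg kind" for x y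
    using lie_alg_lincomb[OF that, of 1 1] by simp
  show "c *\<^sub>R x \<in> lie_alg kind" if "x \<in> lie_alg kind" for c x
    using lie_alg_lincomb[OF that that, of c 0] by (simp add: scaleR_eq)
qed (rule lie_alg_zero)

section \<open>Order of vanishing at the centre of a chart\<close>

definition ord0_ge :: "complex set \<Rightarrow> (complex \<Rightarrow> complex) \<Rightarrow> int \<Rightarrow> bool" where
  "ord0_ge S f m \<longleftrightarrow> (\<exists>r>0. ball 0 r \<subseteq> S \<and>
     (\<exists>h. h holomorphic_on ball 0 r \<and> (\<forall>\<zeta>\<in>ball 0 r - {0}. f \<zeta> = \<zeta> powi m * h \<zeta>)))"

lemma ord0_ge_cong:
  assumes "ord0_ge S f m" "\<And>\<zeta>. \<zeta> \<in> S - {0} \<Longrightarrow> f \<zeta> = g \<zeta>"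
  shows "ord0_ge S g m"
proof -
  obtain r h where r: "r > 0" "ball 0 r \<subseteq> S" "h holomorphic_on ball 0 r"
    "\<And>\<zeta>. \<zeta> \<in> ball 0 r - {0} \<Longrightarrow> f \<zeta> = \<zeta> powi m * h \<zeta>"
    using assms(1) unfolding ord0_ge_def by blast
  have "g \<zeta> = \<zeta> powi m * h \<zeta>" if "\<zeta> \<in> ball 0 r - {0}" for \<zeta>
    using assms(2)[of \<zeta>] r(2) r(4)[OF that] that by auto
  then show ?thesis unfolding ord0_ge_def using r(1-3) by blast
qed

lemma ord0_ge_lincomb:
  assumes "ord0_ge S f m" "ord0_ge S g m"
  shows "ord0_ge S (\<lambda>\<zeta>. c1 * f \<zeta> + c2 * g \<zeta>) m"
proof -
  obtain r h where r: "r > 0" "ball 0 r \<subseteq> S" "h holomorphic_on ball 0 r"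
    "\<And>\<zeta>. \<zeta> \<in> ball 0 r - {0} \<Longrightarrow> f \<zeta> = \<zeta> powi m * h \<zeta>"
    using assms(1) unfolding ord0_ge_def by blast
  obtain r' h' where r': "r' > 0" "ball 0 r' \<subseteq> S" "h' holomorphic_on ball 0 r'"
    "\<And>\<zeta>. \<zeta> \<in> ball 0 r' - {0} \<Longrightarrow> g \<zeta> = \<zeta> powi m * h' \<zeta>"
    using assms(2) unfolding ord0_ge_def by blast
  have "h holomorphic_on ball 0 (min r r')"
    by (rule holomorphic_on_subset[OF r(3)]) auto
  moreover have "h' holomorphic_on ball 0 (min r r')"
    by (rule holomorphic_on_subset[OF r'(3)]) auto
  ultimately have "(\<lambda>\<zeta>. c1 * h \<zeta> + c2 * h' \<zeta>) holomorphic_on ball 0 (min r r')"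
    by (intro holomorphic_intros)
  then show ?thesis unfolding ord0_ge_def using r r'
    by (intro exI[of _ "min r r'"] conjI exI[of _ "\<lambda>\<zeta>. c1 * h \<zeta> + c2 * h' \<zeta>"])
       (auto simp: algebra_simps)
qed

lemma ord0_ge_monomial:
  assumes "r > 0" "ball 0 r \<subseteq> S"
  shows "ord0_ge S (\<lambda>\<zeta>. \<zeta> powi m * y) m"
  unfolding ord0_ge_def using assms by (auto intro!: exI[of _ r] exI[of _ "\<lambda>_. y"])

lemma ord0_ge_mono:
  assumes "ord0_ge S f m'" "m \<le> m'"
  shows "ord0_ge S f m"
proof -
  obtain r h where r: "r > 0" "ball 0 r \<subseteq> S" "h holomorphic_on ball 0 r"
    "\<And>\<zeta>. \<zeta> \<in> ball 0 r - {0} \<Longrightarrow> f \<zeta> = \<zeta> powi m' * h \<zeta>"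
    using assms(1) unfolding ord0_ge_def by blast
  define k where "k = nat (m' - m)"
  have "f \<zeta> = \<zeta> powi m * (\<zeta> ^ k * h \<zeta>)" if "\<zeta> \<in> ball 0 r - {0}" for \<zeta>
  proof -
    have "\<zeta> powi m' = \<zeta> powi m * \<zeta> ^ k"
      using that assms(2) by (simp add: k_def flip: power_int_add power_int_of_nat)
    then show ?thesis using r(4) that by (simp add: mult.assoc)
  qed
  moreover have "(\<lambda>\<zeta>. \<zeta> ^ k * h \<zeta>) holomorphic_on ball 0 r"
    by (intro holomorphic_intros r(3))
  ultimately show ?thesis unfolding ord0_ge_def using r by blast
qed

text \<open>The leading coefficient is h(0); the remainder h - h(0) is divisible by the coordinate.\<close>
lemma ord0_ge_leading:
  assumes "ord0_ge S f m"
  shows "\<exists>y. ord0_ge S (\<lambda>\<zeta>. f \<zeta> - \<zeta> powi m * y) (m + 1)"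
proof -
  obtain r h where r: "r > 0" "ball 0 r \<subseteq> S" "h holomorphic_on ball 0 r"
    "\<And>\<zeta>. \<zeta> \<in> ball 0 r - {0} \<Longrightarrow> f \<zeta> = \<zeta> powi m * h \<zeta>"
    using assms unfolding ord0_ge_def by blast
  define g where "g = (\<lambda>\<zeta>. if \<zeta> = 0 then deriv h 0 else (h \<zeta> - h 0) / (\<zeta> - 0))"
  have "g holomorphic_on ball 0 r"
    unfolding g_def by (rule pole_lemma_open[OF r(3) open_ball])
  moreover have "f \<zeta> - \<zeta> powi m * h 0 = \<zeta> powi (m + 1) * g \<zeta>" if "\<zeta> \<in> ball 0 r - {0}" for \<zeta>
  proof -
    have "\<zeta> powi (m + 1) = \<zeta> powi m * \<zeta>" using that by (simp add: power_int_add_1)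
    then show ?thesis using r(4)[OF that] that by (simp add: g_def field_simps)
  qed
  ultimately show ?thesis unfolding ord0_ge_def using r(1,2) by blast
qed

lemma ord0_ge_leading_tendsto:
  assumes "ord0_ge S (\<lambda>\<zeta>. f \<zeta> - \<zeta> powi m * y) (m + 1)"
  shows "((\<lambda>\<zeta>. \<zeta> powi (-m) * f \<zeta>) \<longlongrightarrow> y) (at 0)"
proof -
  obtain r h where r: "r > 0" "h holomorphic_on ball 0 r"
    "\<And>\<zeta>. \<zeta> \<in> ball 0 r - {0} \<Longrightarrow> f \<zeta> - \<zeta> powi m * y = \<zeta> powi (m + 1) * h \<zeta>"
    using assms unfolding ord0_ge_def by blast
  have "\<zeta> powi (-m) * f \<zeta> = y + \<zeta> * h \<zeta>" if "\<zeta> \<in> ball 0 r - {0}" for \<zeta>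
  proof -
    have "\<zeta> powi (m + 1) = \<zeta> powi m * \<zeta>" using that by (simp add: power_int_add_1)
    then show ?thesis using r(3)[OF that] that
      by (simp add: power_int_minus field_simps eq_diff_eq)
  qed
  then have "eventually (\<lambda>\<zeta>. y + \<zeta> * h \<zeta> = \<zeta> powi (-m) * f \<zeta>) (at 0)"
    unfolding eventually_at using r(1) by (auto intro!: exI[of _ r] simp: dist_norm)
  moreover have "isCont h 0"
    using r(1,2) by (intro continuous_on_interior[OF holomorphic_on_imp_continuous_on]) auto
  then have "((\<lambda>\<zeta>. y + \<zeta> * h \<zeta>) \<longlongrightarrow> y + 0 * h 0) (at 0)"
    by (intro tendsto_intros) (auto simp: isCont_def)
  ultimately show ?thesis by (simp add: tendsto_cong)
qed

lemma ord_ge_iff_ord0_ge: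
  "ord_ge U \<phi> L m \<longleftrightarrow> (\<forall>i j. ord0_ge (\<phi> ` U) (\<lambda>\<zeta>. in_chart U \<phi> L \<zeta> $ i $ j) m)"
  unfolding ord_ge_def ord0_ge_def by blast

lemma ord_ge_lincomb:
  assumes "ord_ge U \<phi> L1 m" "ord_ge U \<phi> L2 m"
  shows "ord_ge U \<phi> (\<lambda>x. msc c1 (L1 x) + msc c2 (L2 x)) m"
  unfolding ord_ge_iff_ord0_ge
proof (intro allI)
  fix i j
  have "ord0_ge (\<phi> ` U) (\<lambda>\<zeta>. c1 * in_chart U \<phi> L1 \<zeta> $ i $ j + c2 * in_chart U \<phi> L2 \<zeta> $ i $ j) m"
    using assms unfolding ord_ge_iff_ord0_ge by (intro ord0_ge_lincomb) auto
  then show "ord0_ge (\<phi> ` U) (\<lambda>\<zeta>. in_chart U \<phi> (\<lambda>x. msc c1 (L1 x) + msc c2 (L2 x)) \<zeta> $ i $ j) m"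
    by (simp add: in_chart_def)
qed

lemma ord_ge_mono: "ord_ge U \<phi> L m' \<Longrightarrow> m \<le> m' \<Longrightarrow> ord_ge U \<phi> L m"
  unfolding ord_ge_iff_ord0_ge using ord0_ge_mono by blast

lemma in_chart_monomial:
  "\<zeta> \<in> \<phi> ` U \<Longrightarrow> in_chart U \<phi> (\<lambda>x. msc (\<phi> x powi m) Y) \<zeta> $ i $ j = \<zeta> powi m * Y $ i $ j"
  by (simp add: in_chart_def f_inv_into_f)

lemma in_chart_diff_monomial:
  "\<zeta> \<in> \<phi> ` U \<Longrightarrow> in_chart U \<phi> (\<lambda>x. L x - msc (\<phi> x powi m) Y) \<zeta> $ i $ j =
    in_chart U \<phi> L \<zeta> $ i $ j - \<zeta> powi m * Y $ i $ j"
  by (simp add: in_chart_def f_inv_into_f)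

lemma ord_ge_monomial:
  assumes "\<exists>r>0. ball 0 r \<subseteq> \<phi> ` U"
  shows "ord_ge U \<phi> (\<lambda>x. msc (\<phi> x powi m) Y) m"
  unfolding ord_ge_iff_ord0_ge
proof (intro allI)
  fix i j
  have "ord0_ge (\<phi> ` U) (\<lambda>\<zeta>. \<zeta> powi m * Y $ i $ j) m"
    using assms ord0_ge_monomial by blast
  then show "ord0_ge (\<phi> ` U) (\<lambda>\<zeta>. in_chart U \<phi> (\<lambda>x. msc (\<phi> x powi m) Y) \<zeta> $ i $ j) m"
    by (rule ord0_ge_cong) (simp add: in_chart_monomial)
qed

lemma ord_ge_zero: "\<exists>r>0. ball 0 r \<subseteq> \<phi> ` U \<Longrightarrow> ord_ge U \<phi> (\<lambda>x. 0) m"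
  using ord_ge_monomial[of \<phi> U m 0] by simp

lemma ord_ge_leading:
  assumes "ord_ge U \<phi> L m"
  shows "\<exists>Y. ord_ge U \<phi> (\<lambda>x. L x - msc (\<phi> x powi m) Y) (m + 1)"
proof -
  have "\<forall>i j. \<exists>y. ord0_ge (\<phi> ` U) (\<lambda>\<zeta>. in_chart U \<phi> L \<zeta> $ i $ j - \<zeta> powi m * y) (m + 1)"
    using assms ord0_ge_leading unfolding ord_ge_iff_ord0_ge by blast
  then obtain y where y: "\<And>i j. ord0_ge (\<phi> ` U) (\<lambda>\<zeta>. in_chart U \<phi> L \<zeta> $ i $ j - \<zeta> powi m * y i j) (m + 1)"
    by metis
  have "ord0_ge (\<phi> ` U) (\<lambda>\<zeta>. in_chart U \<phi> (\<lambda>x. L x - msc (\<phi> x powi m) (\<chi> i j. y i j)) \<zeta> $ i $ j) (m + 1)"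
    for i j
    using y[of i j] by (rule ord0_ge_cong) (simp add: in_chart_diff_monomial)
  then show ?thesis unfolding ord_ge_iff_ord0_ge by blast
qed

lemma ord_ge_leading_tendsto:
  assumes "ord_ge U \<phi> (\<lambda>x. L x - msc (\<phi> x powi m) Y) (m + 1)"
  shows "((\<lambda>\<zeta>. msc (\<zeta> powi (-m)) (in_chart U \<phi> L \<zeta>)) \<longlongrightarrow> Y) (at 0)"
proof (intro vec_tendstoI)
  fix i j
  have "ord0_ge (\<phi> ` U) (\<lambda>\<zeta>. in_chart U \<phi> (\<lambda>x. L x - msc (\<phi> x powi m) Y) \<zeta> $ i $ j) (m + 1)"
    using assms unfolding ord_ge_iff_ord0_ge by blast
  then have "ord0_ge (\<phi> ` U) (\<lambda>\<zeta>. in_chart U \<phi> L \<zeta> $ i $ j - \<zeta> powi m * Y $ i $ j) (m + 1)"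
    by (rule ord0_ge_cong) (simp add: in_chart_diff_monomial)
  then show "((\<lambda>\<zeta>. msc (\<zeta> powi (-m)) (in_chart U \<phi> L \<zeta>) $ i $ j) \<longlongrightarrow> Y $ i $ j) (at 0)"
    by (simp add: ord0_ge_leading_tendsto)
qed

lemma ord_ge_leading_unique:
  assumes "ord_ge U \<phi> (\<lambda>x. L x - msc (\<phi> x powi m) Y) (m + 1)"
    and "ord_ge U \<phi> (\<lambda>x. L x - msc (\<phi> x powi m) Y') (m + 1)"
  shows "Y = Y'"
  using ord_ge_leading_tendsto[OF assms(1)] ord_ge_leading_tendsto[OF assms(2)]
  by (rule tendsto_unique[OF at_neq_bot])

lemma mat_holo_on_lincomb:
  assumes "mat_holo_on H1 S1" "mat_holo_on H2 S2" "S \<subseteq> S1" "S \<subseteq> S2"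
  shows "mat_holo_on (\<lambda>\<zeta>. msc c1 (H1 \<zeta>) + msc c2 (H2 \<zeta>)) S"
proof -
  have "(\<lambda>\<zeta>. H1 \<zeta> $ i $ j) holomorphic_on S" "(\<lambda>\<zeta>. H2 \<zeta> $ i $ j) holomorphic_on S" for i j
    using assms holomorphic_on_subset unfolding mat_holo_on_def by blast+
  then show ?thesis unfolding mat_holo_on_def by (auto intro!: holomorphic_intros)
qed

lemma deriv0_lincomb:
  assumes "mat_holo_on H1 (ball 0 r1)" "mat_holo_on H2 (ball 0 r2)" "r1 > 0" "r2 > 0"
  shows "(\<chi> i j. deriv (\<lambda>\<zeta>. (msc c1 (H1 \<zeta>) + msc c2 (H2 \<zeta>)) $ i $ j) 0) =
    msc c1 (\<chi> i j. deriv (\<lambda>\<zeta>. H1 \<zeta> $ i $ j) 0) + msc c2 (\<chi> i j. deriv (\<lambda>\<zeta>. H2 \<zeta> $ i $ j) 0)"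
proof -
  have "(\<lambda>\<zeta>. H1 \<zeta> $ i $ j) field_differentiable at 0" "(\<lambda>\<zeta>. H2 \<zeta> $ i $ j) field_differentiable at 0"
    for i j
    using assms unfolding mat_holo_on_def
    by (auto intro!: holomorphic_on_imp_differentiable_at[of _ "ball 0 _"])
  then show ?thesis
    by (simp add: vec_eq_iff deriv_add deriv_cmult field_differentiable_mult)
qed

lemma tyurin_cond_SL_eq_GL: "tyurin_cond SL U w a L = tyurin_cond GL U w a L"
  by simp

lemma tyurin_cond_GL_lincomb:
  assumes "tyurin_cond GL U w a L1" "tyurin_cond GL U w a L2"
  shows "tyurin_cond GL U w a (\<lambda>x. msc c1 (L1 x) + msc c2 (L2 x))"
proof -
  obtain r1 b1 \<kappa>1 H1 where 1: "r1 > 0" "ball 0 r1 \<subseteq> w ` U" "mat_holo_on H1 (ball 0 r1)"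
    "\<forall>\<zeta>\<in>ball 0 r1 - {0}. in_chart U w L1 \<zeta> = msc (1/\<zeta>) (outer a b1) + H1 \<zeta>"
    "bil b1 a = 0" "H1 0 *v a = \<kappa>1 *s a" using assms(1) by auto
  obtain r2 b2 \<kappa>2 H2 where 2: "r2 > 0" "ball 0 r2 \<subseteq> w ` U" "mat_holo_on H2 (ball 0 r2)"
    "\<forall>\<zeta>\<in>ball 0 r2 - {0}. in_chart U w L2 \<zeta> = msc (1/\<zeta>) (outer a b2) + H2 \<zeta>"
    "bil b2 a = 0" "H2 0 *v a = \<kappa>2 *s a" using assms(2) by auto
  define b where "b = c1 *s b1 + c2 *s b2"
  define H where "H \<zeta> = msc c1 (H1 \<zeta>) + msc c2 (H2 \<zeta>)" for \<zeta>
  have "mat_holo_on H (ball 0 (min r1 r2))"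
    unfolding H_def using 1(3) 2(3) by (rule mat_holo_on_lincomb) auto
  moreover have "in_chart U w (\<lambda>x. msc c1 (L1 x) + msc c2 (L2 x)) \<zeta> = msc (1/\<zeta>) (outer a b) + H \<zeta>"
    if "\<zeta> \<in> ball 0 (min r1 r2) - {0}" for \<zeta>
    using 1(4) 2(4) that by (auto simp: b_def H_def in_chart_def vec_eq_iff outer_def algebra_simps)
  moreover have "bil b a = 0" using 1(5) 2(5)
    by (simp add: b_def bil_def algebra_simps sum.distrib flip: sum_distrib_left)
  moreover have "H 0 *v a = (c1 * \<kappa>1 + c2 * \<kappa>2) *s a" using 1(6) 2(6)
    by (simp add: H_def vec_eq_iff matrix_vector_mult_def algebra_simps sum.distrib
        flip: sum_distrib_left)
  ultimately show ?thesis using 1(1,2) 2(1,2) unfolding tyurin_cond.simps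
    by (intro exI[of _ "min r1 r2"] conjI exI[of _ b] exI[of _ "c1 * \<kappa>1 + c2 * \<kappa>2"] exI[of _ H])
       auto
qed

lemma tyurin_cond_SO_lincomb:
  assumes "tyurin_cond SO U w a L1" "tyurin_cond SO U w a L2"
  shows "tyurin_cond SO U w a (\<lambda>x. msc c1 (L1 x) + msc c2 (L2 x))"
proof -
  obtain r1 b1 \<kappa>1 H1 where 1: "r1 > 0" "ball 0 r1 \<subseteq> w ` U" "mat_holo_on H1 (ball 0 r1)"
    "\<forall>\<zeta>\<in>ball 0 r1 - {0}. in_chart U w L1 \<zeta> = msc (1/\<zeta>) (outer a b1 - outer b1 a) + H1 \<zeta>"
    "bil b1 a = 0" "H1 0 *v a = \<kappa>1 *s a" using assms(1) by auto
  obtain r2 b2 \<kappa>2 H2 where 2: "r2 > 0" "ball 0 r2 \<subseteq> w ` U" "mat_holo_on H2 (ball 0 r2)"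
    "\<forall>\<zeta>\<in>ball 0 r2 - {0}. in_chart U w L2 \<zeta> = msc (1/\<zeta>) (outer a b2 - outer b2 a) + H2 \<zeta>"
    "bil b2 a = 0" "H2 0 *v a = \<kappa>2 *s a" using assms(2) by auto
  define b where "b = c1 *s b1 + c2 *s b2"
  define H where "H \<zeta> = msc c1 (H1 \<zeta>) + msc c2 (H2 \<zeta>)" for \<zeta>
  have "mat_holo_on H (ball 0 (min r1 r2))"
    unfolding H_def using 1(3) 2(3) by (rule mat_holo_on_lincomb) auto
  moreover have "in_chart U w (\<lambda>x. msc c1 (L1 x) + msc c2 (L2 x)) \<zeta> =
      msc (1/\<zeta>) (outer a b - outer b a) + H \<zeta>" if "\<zeta> \<in> ball 0 (min r1 r2) - {0}" for \<zeta>
    using 1(4) 2(4) that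
    by (simp add: in_chart_def) (simp add: b_def H_def vec_eq_iff outer_def algebra_simps)
  moreover have "bil b a = 0" using 1(5) 2(5)
    by (simp add: b_def bil_def algebra_simps sum.distrib flip: sum_distrib_left)
  moreover have "H 0 *v a = (c1 * \<kappa>1 + c2 * \<kappa>2) *s a" using 1(6) 2(6)
    by (simp add: H_def vec_eq_iff matrix_vector_mult_def algebra_simps sum.distrib
        flip: sum_distrib_left)
  ultimately show ?thesis using 1(1,2) 2(1,2) unfolding tyurin_cond.simps
    by (intro exI[of _ "min r1 r2"] conjI exI[of _ b] exI[of _ "c1 * \<kappa>1 + c2 * \<kappa>2"] exI[of _ H])
       auto
qed

lemma tyurin_cond_SP_lincomb:
  assumes "tyurin_cond (SP \<sigma>) U w a L1" "tyurin_cond (SP \<sigma>) U w a L2"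
  shows "tyurin_cond (SP \<sigma>) U w a (\<lambda>x. msc c1 (L1 x) + msc c2 (L2 x))"
proof -
  let ?D = "\<lambda>H. \<chi> i j. deriv (\<lambda>\<zeta>. H \<zeta> $ i $ j) 0"
  obtain r1 b1 \<nu>1 \<kappa>1 H1 where 1: "r1 > 0" "ball 0 r1 \<subseteq> w ` U" "mat_holo_on H1 (ball 0 r1)"
    "\<forall>\<zeta>\<in>ball 0 r1 - {0}. in_chart U w L1 \<zeta> = msc (1/\<zeta>^2) (msc \<nu>1 (outer a a ** \<sigma>)) +
       msc (1/\<zeta>) ((outer a b1 + outer b1 a) ** \<sigma>) + H1 \<zeta>"
    "bil b1 (\<sigma> *v a) = 0" "H1 0 *v a = \<kappa>1 *s a" "bil a (\<sigma> *v (?D H1 *v a)) = 0"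
    using assms(1) by auto
  obtain r2 b2 \<nu>2 \<kappa>2 H2 where 2: "r2 > 0" "ball 0 r2 \<subseteq> w ` U" "mat_holo_on H2 (ball 0 r2)"
    "\<forall>\<zeta>\<in>ball 0 r2 - {0}. in_chart U w L2 \<zeta> = msc (1/\<zeta>^2) (msc \<nu>2 (outer a a ** \<sigma>)) +
       msc (1/\<zeta>) ((outer a b2 + outer b2 a) ** \<sigma>) + H2 \<zeta>"
    "bil b2 (\<sigma> *v a) = 0" "H2 0 *v a = \<kappa>2 *s a" "bil a (\<sigma> *v (?D H2 *v a)) = 0"
    using assms(2) by auto
  define b where "b = c1 *s b1 + c2 *s b2"
  define H where "H \<zeta> = msc c1 (H1 \<zeta>) + msc c2 (H2 \<zeta>)" for \<zeta>
  have "mat_holo_on H (ball 0 (min r1 r2))"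
    unfolding H_def using 1(3) 2(3) by (rule mat_holo_on_lincomb) auto
  moreover have "in_chart U w (\<lambda>x. msc c1 (L1 x) + msc c2 (L2 x)) \<zeta> =
      msc (1/\<zeta>^2) (msc (c1 * \<nu>1 + c2 * \<nu>2) (outer a a ** \<sigma>)) +
      msc (1/\<zeta>) ((outer a b + outer b a) ** \<sigma>) + H \<zeta>" if "\<zeta> \<in> ball 0 (min r1 r2) - {0}" for \<zeta>
    using 1(4) 2(4) that
    by (simp add: in_chart_def)
       (simp add: b_def H_def vec_eq_iff outer_def matrix_matrix_mult_def sum_distrib_left
        sum.distrib add_divide_distrib algebra_simps)
  moreover have "bil b (\<sigma> *v a) = 0" using 1(5) 2(5)
    by (simp add: b_def bil_def algebra_simps sum.distrib flip: sum_distrib_left)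
  moreover have "H 0 *v a = (c1 * \<kappa>1 + c2 * \<kappa>2) *s a" using 1(6) 2(6)
    by (simp add: H_def vec_eq_iff matrix_vector_mult_def algebra_simps sum.distrib
        flip: sum_distrib_left)
  moreover have "bil a (\<sigma> *v (?D H *v a)) =
      c1 * bil a (\<sigma> *v (?D H1 *v a)) + c2 * bil a (\<sigma> *v (?D H2 *v a))"
    unfolding H_def deriv0_lincomb[OF 1(3) 2(3) 1(1) 2(1)]
    by (simp add: bil_def matrix_vector_mult_def sum_distrib_left sum.distrib algebra_simps)
  ultimately show ?thesis using 1 2 unfolding tyurin_cond.simps
    by (intro exI[of _ "min r1 r2"] conjI exI[of _ b] exI[of _ "c1 * \<nu>1 + c2 * \<nu>2"]
        exI[of _ "c1 * \<kappa>1 + c2 * \<kappa>2"] exI[of _ H]) auto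
qed

lemma tyurin_cond_lincomb:
  "tyurin_cond kind U w a L1 \<Longrightarrow> tyurin_cond kind U w a L2 \<Longrightarrow>
    tyurin_cond kind U w a (\<lambda>x. msc c1 (L1 x) + msc c2 (L2 x))"
  by (cases kind) (simp_all only: tyurin_cond_SL_eq_GL tyurin_cond_GL_lincomb
      tyurin_cond_SO_lincomb tyurin_cond_SP_lincomb)

lemma tyurin_cond_zero:
  assumes "\<exists>r>0. ball 0 r \<subseteq> w ` U"
  shows "tyurin_cond kind U w a (\<lambda>x. 0)"
proof -
  obtain r where "r > 0" "ball 0 r \<subseteq> w ` U" using assms by blast
  then show ?thesis
    by (cases kind) (auto intro!: exI[of _ r] exI[of _ "0 :: complex^_"] exI[of _ "0 :: complex"]
        exI[of _ "\<lambda>_. 0 :: _ cmat"] simp: in_chart_def mat_holo_on_def bil_def outer_def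
        matrix_vector_mult_def matrix_matrix_mult_def vec_eq_iff)
qed

lemma isolated_singularity_at_chart:
  assumes "is_chart V \<psi>" "finite S" "x \<in> V" "f holomorphic_on \<psi> ` (V - S)"
  shows "isolated_singularity_at f (\<psi> x)"
proof -
  define T where "T = \<psi> ` V - (\<psi> ` (V \<inter> S) - {\<psi> x})"
  have "open T"
    using assms(1,2) unfolding T_def is_chart_def by (intro open_Diff finite_imp_closed) auto
  moreover have "\<psi> x \<in> T" "T - {\<psi> x} \<subseteq> \<psi> ` (V - S)"
    using assms(3) unfolding T_def by auto
  ultimately show ?thesis
    using isolated_singularity_at_holomorphic holomorphic_on_subset[OF assms(4)] by metis
qed

lemma not_essential_lincomb:
  assumes "isolated_singularity_at f z" "not_essential f z"
    and "isolated_singularity_at g z" "not_essential g z"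
  shows "not_essential (\<lambda>w. c1 * f w + c2 * g w) z"
proof -
  have "f meromorphic_on {z}" "g meromorphic_on {z}"
    using assms by (simp_all add: meromorphic_at_iff)
  then have "(\<lambda>w. c1 * f w + c2 * g w) meromorphic_on {z}"
    by (intro meromorphic_intros)
  then show ?thesis by (simp add: meromorphic_at_iff)
qed

lemma merom_off_lincomb:
  fixes L1 L2 :: "'a::topological_space \<Rightarrow> 'n::finite cmat"
  assumes charts: "\<forall>(V,\<psi>)\<in>atlas. is_chart V \<psi>" and "finite S"
    and L1: "merom_off atlas S L1" and L2: "merom_off atlas S L2"
  shows "merom_off atlas S (\<lambda>x. msc c1 (L1 x) + msc c2 (L2 x))"
  unfolding merom_off_def
proof (intro conjI; clarify)
  fix V \<psi> assume "(V, \<psi>) \<in> atlas"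
  then have "mat_holo_on (\<lambda>\<zeta>. msc c1 (in_chart V \<psi> L1 \<zeta>) + msc c2 (in_chart V \<psi> L2 \<zeta>)) (\<psi> ` (V - S))"
    using L1 L2 unfolding merom_off_def by (intro mat_holo_on_lincomb) auto
  then show "mat_holo_on (in_chart V \<psi> (\<lambda>x. msc c1 (L1 x) + msc c2 (L2 x))) (\<psi> ` (V - S))"
    by (simp add: in_chart_def)
next
  fix V \<psi> x i j assume V\<psi>: "(V, \<psi>) \<in> atlas" and x: "x \<in> V" "x \<in> S"
  let ?f = "\<lambda>(L :: 'a \<Rightarrow> 'n cmat) \<zeta>. in_chart V \<psi> L \<zeta> $ i $ j"
  have "isolated_singularity_at (?f L) (\<psi> x)" "not_essential (?f L) (\<psi> x)"
    if "merom_off atlas S L" for L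
  proof -
    have "?f L holomorphic_on \<psi> ` (V - S)"
      using that V\<psi> unfolding merom_off_def mat_holo_on_def by auto
    then show "isolated_singularity_at (?f L) (\<psi> x)"
      using charts V\<psi> x \<open>finite S\<close> by (intro isolated_singularity_at_chart) auto
    show "not_essential (?f L) (\<psi> x)"
      using that V\<psi> x unfolding merom_off_def by auto
  qed
  then have "not_essential (\<lambda>\<zeta>. c1 * ?f L1 \<zeta> + c2 * ?f L2 \<zeta>) (\<psi> x)"
    using L1 L2 by (intro not_essential_lincomb)
  then show "not_essential (\<lambda>\<zeta>. in_chart V \<psi> (\<lambda>x. msc c1 (L1 x) + msc c2 (L2 x)) \<zeta> $ i $ j) (\<psi> x)"
    by (simp add: in_chart_def)
qed

lemma merom_off_zero: "merom_off atlas S (\<lambda>x. 0)"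
  unfolding merom_off_def in_chart_def mat_holo_on_def
  by (auto intro: not_essential_const[unfolded zero_vec_def])

lemma lincomb_closed:
  assumes "(\<lambda>x. 0) \<in> C"
    and "\<And>L1 L2 c1 c2. L1 \<in> C \<Longrightarrow> L2 \<in> C \<Longrightarrow> (\<lambda>x. msc c1 (L1 x) + msc c2 (L2 x)) \<in> C"
    and "finite F" "\<forall>i\<in>F. f i \<in> C"
  shows "(\<lambda>x. \<Sum>i\<in>F. msc (c i) (f i x)) \<in> C"
  using assms(3,4)
proof (induction F rule: finite_induct)
  case (insert i F)
  then have "(\<lambda>x. msc (c i) (f i x) + msc 1 (\<Sum>i\<in>F. msc (c i) (f i x))) \<in> C"
    by (intro assms(2)) auto
  then show ?case using insert by simp
qed (simp add: assms(1))

section \<open>Leading parts on the filtration of the Lax operator algebra\<close>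

lemma (in module) inj_on_if_family_independent:
  assumes "\<And>F c. finite F \<Longrightarrow> F \<subseteq> I \<Longrightarrow> (\<Sum>i\<in>F. scale (c i) (g i)) = 0 \<Longrightarrow> \<forall>i\<in>F. c i = 0"
  shows "inj_on g I"
proof (rule inj_onI, rule ccontr)
  fix i j assume ij: "i \<in> I" "j \<in> I" "g i = g j" "i \<noteq> j"
  define c where "c k = (if k = i then 1 else -1 :: 'a)" for k
  have "(\<Sum>k\<in>{i, j}. scale (c k) (g k)) = 0"
    using ij by (simp add: c_def)
  then show False
    using assms[of "{i, j}" c] ij by (simp add: c_def)
qed

lemma (in module) independent_image_if_family_independent:
  assumes "\<And>F c. finite F \<Longrightarrow> F \<subseteq> I \<Longrightarrow> (\<Sum>i\<in>F. scale (c i) (g i)) = 0 \<Longrightarrow> \<forall>i\<in>F. c i = 0"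
  shows "independent (g ` I)"
  unfolding independent_explicit_module
proof clarify
  fix t u v assume t: "finite t" "t \<subseteq> g ` I" "(\<Sum>v\<in>t. scale (u v) v) = 0" "v \<in> t"
  obtain F where F: "F \<subseteq> I" "finite F" "t = g ` F"
    using finite_subset_image[OF t(1,2)] by blast
  have "inj_on g F"
    using inj_on_if_family_independent[OF assms] F(1) inj_on_subset by blast
  then have "(\<Sum>i\<in>F. scale (u (g i)) (g i)) = 0"
    using t(3) F(3) by (simp add: sum.reindex)
  then have "\<forall>i\<in>F. u (g i) = 0"
    using assms[OF F(2,1), of "\<lambda>i. u (g i)"] by blast
  then show "u v = 0"
    using t(4) F(3) by auto
qed

text \<open>Leading parts at the points P_1, ..., P_N are N-tuples of matrices, encoded as functions on
  indices that vanish outside {1..N}.\<close>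
definition fmsc :: "complex \<Rightarrow> (nat \<Rightarrow> 'n::finite cmat) \<Rightarrow> nat \<Rightarrow> 'n cmat" where
  "fmsc c f = (\<lambda>p. msc c (f p))"

interpretation fam: vector_space "fmsc :: complex \<Rightarrow> (nat \<Rightarrow> 'n::finite cmat) \<Rightarrow> _"
  by unfold_locales (auto simp: fmsc_def fun_eq_iff msc_add msc_add_left)

lemma sum_fun_apply: "(\<Sum>i\<in>F. f i) x = (\<Sum>i\<in>F. f i x)"
  by (induction F rule: infinite_finite_induct) auto

locale lax_setting =
  fixes atlas :: "('a::t2_space set \<times> ('a \<Rightarrow> complex)) set"
    and kind :: "'n::finite liekind"
    and A :: "'a set" and K :: nat and \<gamma> :: "nat \<Rightarrow> 'a"
    and wU :: "nat \<Rightarrow> 'a set" and w :: "nat \<Rightarrow> 'a \<Rightarrow> complex" and \<alpha> :: "nat \<Rightarrow> complex^'n"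
    and N :: nat and zU :: "nat \<Rightarrow> 'a set" and z :: "nat \<Rightarrow> 'a \<Rightarrow> complex"
  assumes charts: "\<forall>(U,\<phi>)\<in>atlas. is_chart U \<phi>" and finite_A: "finite A"
    and w_ball: "\<forall>s\<in>{1..K}. \<exists>r>0. ball 0 r \<subseteq> w s ` wU s"
    and z_ball: "\<forall>p\<in>{1..N}. \<exists>r>0. ball 0 r \<subseteq> z p ` zU p"
begin

abbreviation lax where "lax \<equiv> lax_alg atlas kind A K \<gamma> wU w \<alpha>"
abbreviation lax_filt where "lax_filt m \<equiv> filt lax N zU z m"

lemma lax_zero: "(\<lambda>x. 0) \<in> lax"
  using w_ball by (auto simp: lax_alg_def lie_alg_zero merom_off_zero intro: tyurin_cond_zero)

lemma lax_lincomb: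
  assumes "L1 \<in> lax" "L2 \<in> lax"
  shows "(\<lambda>x. msc c1 (L1 x) + msc c2 (L2 x)) \<in> lax"
  using assms charts finite_A
  by (auto simp: lax_alg_def intro: lie_alg_lincomb merom_off_lincomb tyurin_cond_lincomb)

lemma lax_in_lie_alg: "L \<in> lax \<Longrightarrow> L x \<in> lie_alg kind"
  by (cases "x \<in> A \<union> \<gamma> ` {1..K}") (auto simp: lax_alg_def lie_alg_zero)

lemma lax_filt_iff: "L \<in> lax_filt m \<longleftrightarrow> L \<in> lax \<and> (\<forall>p\<in>{1..N}. ord_ge (zU p) (z p) L m)"
  unfolding filt_def by blast

lemma lax_filt_zero: "(\<lambda>x. 0) \<in> lax_filt m"
  using lax_zero z_ball by (auto simp: lax_filt_iff intro!: ord_ge_zero)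

lemma lax_filt_lincomb:
  "L1 \<in> lax_filt m \<Longrightarrow> L2 \<in> lax_filt m \<Longrightarrow> (\<lambda>x. msc c1 (L1 x) + msc c2 (L2 x)) \<in> lax_filt m"
  by (auto simp: lax_filt_iff intro: lax_lincomb ord_ge_lincomb)

lemma lax_filt_sum:
  "finite F \<Longrightarrow> \<forall>i\<in>F. f i \<in> lax_filt m \<Longrightarrow> (\<lambda>x. \<Sum>i\<in>F. msc (c i) (f i x)) \<in> lax_filt m"
  by (rule lincomb_closed[OF lax_filt_zero lax_filt_lincomb])

lemma lax_filt_diff: "L1 \<in> lax_filt m \<Longrightarrow> L2 \<in> lax_filt m \<Longrightarrow> (\<lambda>x. L1 x - L2 x) \<in> lax_filt m"
  using lax_filt_lincomb[of L1 m L2 1 "-1"] by simp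

lemma lax_filt_mono: "L \<in> lax_filt m' \<Longrightarrow> m \<le> m' \<Longrightarrow> L \<in> lax_filt m"
  by (auto simp: lax_filt_iff intro: ord_ge_mono)

definition leading_coeff :: "int \<Rightarrow> nat \<Rightarrow> ('a \<Rightarrow> 'n cmat) \<Rightarrow> 'n cmat" where
  "leading_coeff m p L = (SOME Y. ord_ge (zU p) (z p) (\<lambda>x. L x - msc (z p x powi m) Y) (m + 1))"

lemma ord_ge_leading_coeff:
  assumes "L \<in> lax_filt m" "p \<in> {1..N}"
  shows "ord_ge (zU p) (z p) (\<lambda>x. L x - msc (z p x powi m) (leading_coeff m p L)) (m + 1)"
  unfolding leading_coeff_def
  by (rule someI_ex, rule ord_ge_leading) (use assms in \<open>simp add: lax_filt_iff\<close>)

lemma leading_coeff_eqI: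
  assumes "L \<in> lax_filt m" "p \<in> {1..N}"
    and "ord_ge (zU p) (z p) (\<lambda>x. L x - msc (z p x powi m) Y) (m + 1)"
  shows "leading_coeff m p L = Y"
  using ord_ge_leading_coeff[OF assms(1,2)] assms(3) by (rule ord_ge_leading_unique)

text \<open>The leading coefficient is a limit of values of L, and the Lie algebra is closed.\<close>
lemma leading_coeff_in_lie_alg:
  assumes "L \<in> lax_filt m" "p \<in> {1..N}"
  shows "leading_coeff m p L \<in> lie_alg kind"
proof (rule Lim_in_closed_set[OF closed_lie_alg _ at_neq_bot])
  show "((\<lambda>\<zeta>. msc (\<zeta> powi (-m)) (in_chart (zU p) (z p) L \<zeta>)) \<longlongrightarrow> leading_coeff m p L) (at 0)"
    by (rule ord_ge_leading_tendsto[OF ord_ge_leading_coeff[OF assms]])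
  have "L \<in> lax" using assms(1) by (simp add: lax_filt_iff)
  then show "\<forall>\<^sub>F \<zeta> in at 0. msc (\<zeta> powi (-m)) (in_chart (zU p) (z p) L \<zeta>) \<in> lie_alg kind"
    using lie_alg_lincomb[OF lax_in_lie_alg lie_alg_zero, of L _ _ 0]
    by (simp add: in_chart_def)
qed

definition leading_part :: "int \<Rightarrow> ('a \<Rightarrow> 'n cmat) \<Rightarrow> nat \<Rightarrow> 'n cmat" where
  "leading_part m L = (\<lambda>p. if p \<in> {1..N} then leading_coeff m p L else 0)"

lemma lax_filt_succ_iff:
  assumes "L \<in> lax_filt m"
  shows "L \<in> lax_filt (m + 1) \<longleftrightarrow> leading_part m L = 0"
proof
  assume "L \<in> lax_filt (m + 1)"
  then have "leading_coeff m p L = 0" if "p \<in> {1..N}" for p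
    using assms that by (intro leading_coeff_eqI) (auto simp: lax_filt_iff)
  then show "leading_part m L = 0" by (auto simp: leading_part_def)
next
  assume "leading_part m L = 0"
  then have "leading_coeff m p L = 0" if "p \<in> {1..N}" for p
    using that by (metis leading_part_def zero_fun_apply)
  then show "L \<in> lax_filt (m + 1)"
    using assms ord_ge_leading_coeff[OF assms] by (simp add: lax_filt_iff)
qed

lemma leading_part_lincomb:
  assumes "L1 \<in> lax_filt m" "L2 \<in> lax_filt m"
  shows "leading_part m (\<lambda>x. msc c1 (L1 x) + msc c2 (L2 x)) =
    fmsc c1 (leading_part m L1) + fmsc c2 (leading_part m L2)"
proof
  fix p
  show "leading_part m (\<lambda>x. msc c1 (L1 x) + msc c2 (L2 x)) p =
      (fmsc c1 (leading_part m L1) + fmsc c2 (leading_part m L2)) p"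
  proof (cases "p \<in> {1..N}")
    case True
    let ?Y = "msc c1 (leading_coeff m p L1) + msc c2 (leading_coeff m p L2)"
    have "(\<lambda>x. msc c1 (L1 x) + msc c2 (L2 x) - msc (z p x powi m) ?Y) =
      (\<lambda>x. msc c1 (L1 x - msc (z p x powi m) (leading_coeff m p L1)) +
           msc c2 (L2 x - msc (z p x powi m) (leading_coeff m p L2)))"
      by (simp add: fun_eq_iff vec_eq_iff algebra_simps)
    then have "ord_ge (zU p) (z p) (\<lambda>x. msc c1 (L1 x) + msc c2 (L2 x) - msc (z p x powi m) ?Y) (m + 1)"
      using ord_ge_leading_coeff[OF assms(1) True] ord_ge_leading_coeff[OF assms(2) True]
      by (simp add: ord_ge_lincomb)
    then have "leading_coeff m p (\<lambda>x. msc c1 (L1 x) + msc c2 (L2 x)) = ?Y"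
      using lax_filt_lincomb[OF assms] True by (rule_tac leading_coeff_eqI)
    then show ?thesis using True by (simp add: leading_part_def fmsc_def)
  next
    case False
    then show ?thesis by (simp add: leading_part_def fmsc_def del: atLeastAtMost_iff)
  qed
qed

lemma leading_part_sum:
  assumes "finite F" "\<forall>i\<in>F. f i \<in> lax_filt m"
  shows "leading_part m (\<lambda>x. \<Sum>i\<in>F. msc (c i) (f i x)) = (\<Sum>i\<in>F. fmsc (c i) (leading_part m (f i)))"
  using assms
proof (induction F rule: finite_induct)
  case empty
  have "leading_part m (\<lambda>x. 0) = 0"
    using lax_filt_succ_iff[OF lax_filt_zero] lax_filt_zero by blast
  then show ?case by simp
next
  case (insert i F)
  then have "leading_part m (\<lambda>x. msc (c i) (f i x) + msc 1 (\<Sum>i\<in>F. msc (c i) (f i x))) =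
      fmsc (c i) (leading_part m (f i)) + fmsc 1 (leading_part m (\<lambda>x. \<Sum>i\<in>F. msc (c i) (f i x)))"
    by (intro leading_part_lincomb lax_filt_sum) auto
  then show ?case using insert by simp
qed

lemma leading_part_diff:
  assumes "L1 \<in> lax_filt m" "L2 \<in> lax_filt m"
  shows "leading_part m (\<lambda>x. L1 x - L2 x) = leading_part m L1 - leading_part m L2"
  using leading_part_lincomb[OF assms, of 1 "-1"] by simp

lemma leading_part_of_normalized:
  assumes "Y \<in> lax" "s \<in> {1..N}"
    and norm: "\<forall>p\<in>{1..N}. ord_ge (zU p) (z p)
              (\<lambda>x. Y x - (if p = s then msc (z p x powi m) B else 0)) (m + 1)"
  shows "Y \<in> lax_filt m \<and> leading_part m Y = (\<lambda>p. if p = s then B else 0)"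
proof -
  have norm': "ord_ge (zU p) (z p) (\<lambda>x. Y x - msc (z p x powi m) (if p = s then B else 0)) (m + 1)"
    if "p \<in> {1..N}" for p
  proof -
    have "ord_ge (zU p) (z p) (\<lambda>x. Y x - (if p = s then msc (z p x powi m) B else 0)) (m + 1)"
      using norm that by blast
    moreover have "(\<lambda>x. Y x - (if p = s then msc (z p x powi m) B else 0)) =
        (\<lambda>x. Y x - msc (z p x powi m) (if p = s then B else 0))"
      by (simp add: fun_eq_iff)
    ultimately show ?thesis by (simp only:)
  qed
  have "ord_ge (zU p) (z p) Y m" if "p \<in> {1..N}" for p
  proof -
    have "ord_ge (zU p) (z p) (\<lambda>x. msc 1 (Y x - msc (z p x powi m) (if p = s then B else 0)) +
        msc 1 (msc (z p x powi m) (if p = s then B else 0))) m"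
      using z_ball that by (intro ord_ge_lincomb ord_ge_mono[OF norm'] ord_ge_monomial) auto
    then show ?thesis by simp
  qed
  then have "Y \<in> lax_filt m" using assms(1) by (simp add: lax_filt_iff)
  moreover have "leading_part m Y = (\<lambda>p. if p = s then B else 0)"
    using leading_coeff_eqI[OF \<open>Y \<in> lax_filt m\<close> _ norm'] assms(2)
    by (auto simp: leading_part_def fun_eq_iff)
  ultimately show ?thesis ..
qed

end

section \<open>The graded pieces of the filtration\<close>

lemma local_coord_ball:
  assumes "local_coord atlas U \<phi> P"
  shows "\<exists>r>0. ball 0 r \<subseteq> \<phi> ` U"
proof -
  have "open (\<phi> ` U)" "0 \<in> \<phi> ` U"
    using assms unfolding local_coord_def is_chart_def by (auto intro!: image_eqI[of 0 \<phi> P])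
  then show ?thesis using open_contains_ball by blast
qed

locale lax_setting_basis = lax_setting atlas kind A K \<gamma> wU w \<alpha> N zU z
  for atlas :: "('a::t2_space set \<times> ('a \<Rightarrow> complex)) set"
    and kind :: "'n::finite liekind"
    and A :: "'a set" and K :: nat and \<gamma> :: "nat \<Rightarrow> 'a"
    and wU :: "nat \<Rightarrow> 'a set" and w :: "nat \<Rightarrow> 'a \<Rightarrow> complex" and \<alpha> :: "nat \<Rightarrow> complex^'n"
    and N :: nat and zU :: "nat \<Rightarrow> 'a set" and z :: "nat \<Rightarrow> 'a \<Rightarrow> complex" +
  fixes d :: nat and Xb :: "nat \<Rightarrow> 'n cmat"
  assumes basis_indep: "\<forall>c. (\<Sum>u\<in>{1..d}. msc (c u) (Xb u)) = 0 \<longrightarrow> (\<forall>u\<in>{1..d}. c u = 0)"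
    and basis_span: "\<forall>Y\<in>lie_alg kind. \<exists>c. Y = (\<Sum>u\<in>{1..d}. msc (c u) (Xb u))"
begin

definition point_basis :: "nat \<times> nat \<Rightarrow> nat \<Rightarrow> 'n cmat" where
  "point_basis i = (\<lambda>p. if p = snd i then Xb (fst i) else 0)"

lemma point_basis_Pair: "point_basis (u, s) p = (if p = s then Xb u else 0)"
  by (simp add: point_basis_def)

lemma sum_point_basis_apply:
  "(\<Sum>i\<in>{1..d} \<times> {1..N}. fmsc (C i) (point_basis i)) p =
    (if p \<in> {1..N} then \<Sum>u\<in>{1..d}. msc (C (u, p)) (Xb u) else 0)"
proof -
  have "(\<Sum>i\<in>{1..d} \<times> {1..N}. fmsc (C i) (point_basis i)) p =
      (\<Sum>u\<in>{1..d}. \<Sum>s\<in>{1..N}. msc (C (u, s)) (point_basis (u, s) p))"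
    by (simp only: sum.cartesian_product' sum_fun_apply fmsc_def)
  also have "\<dots> = (\<Sum>u\<in>{1..d}. \<Sum>s\<in>{1..N}. if p = s then msc (C (u, s)) (Xb u) else 0)"
    by (intro sum.cong refl) (simp add: point_basis_Pair)
  also have "\<dots> = (\<Sum>u\<in>{1..d}. if p \<in> {1..N} then msc (C (u, p)) (Xb u) else 0)"
    by (simp only: sum.delta'[OF finite_atLeastAtMost])
  finally show ?thesis by (cases "p \<in> {1..N}") (simp_all del: atLeastAtMost_iff)
qed

lemma point_basis_family_independent:
  assumes "F \<subseteq> {1..d} \<times> {1..N}" "(\<Sum>i\<in>F. fmsc (c i) (point_basis i)) = 0"
  shows "\<forall>i\<in>F. c i = 0"
proof
  fix i assume "i \<in> F"
  then obtain u s where i: "i = (u, s)" "u \<in> {1..d}" "s \<in> {1..N}"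
    using assms(1) by auto
  define C where "C j = (if j \<in> F then c j else 0)" for j
  have "(\<Sum>j\<in>{1..d} \<times> {1..N}. fmsc (C j) (point_basis j)) = (\<Sum>j\<in>F. fmsc (c j) (point_basis j))"
    using assms(1) by (intro sum.mono_neutral_cong_right) (auto simp: C_def)
  then have "(\<Sum>u\<in>{1..d}. msc (C (u, s)) (Xb u)) = 0"
    using sum_point_basis_apply[of C s] assms(2) i(3) by simp
  then have "C (u, s) = 0" using basis_indep[rule_format, of "\<lambda>u. C (u, s)"] i(2) by blast
  then show "c i = 0" using \<open>i \<in> F\<close> i(1) by (simp add: C_def)
qed

lemma inj_on_point_basis: "inj_on point_basis ({1..d} \<times> {1..N})"
  using point_basis_family_independent by (intro fam.inj_on_if_family_independent) blast

lemma independent_point_basis: "fam.independent (point_basis ` ({1..d} \<times> {1..N}))"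
  using point_basis_family_independent by (intro fam.independent_image_if_family_independent) blast

lemma leading_part_expansion:
  assumes "L \<in> lax_filt m"
  obtains C where "leading_part m L = (\<Sum>i\<in>{1..d} \<times> {1..N}. fmsc (C i) (point_basis i))"
proof -
  have "\<forall>p\<in>{1..N}. \<exists>c. leading_coeff m p L = (\<Sum>u\<in>{1..d}. msc (c u) (Xb u))"
    using leading_coeff_in_lie_alg[OF assms] basis_span by blast
  then obtain cc where cc: "\<And>p. p \<in> {1..N} \<Longrightarrow> leading_coeff m p L = (\<Sum>u\<in>{1..d}. msc (cc p u) (Xb u))"
    by metis
  have "leading_part m L = (\<Sum>i\<in>{1..d} \<times> {1..N}. fmsc (cc (snd i) (fst i)) (point_basis i))"
    by (rule ext) (simp only: sum_point_basis_apply leading_part_def, simp add: cc)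
  then show ?thesis by (rule that)
qed

definition normalized_family :: "(nat \<Rightarrow> int \<Rightarrow> nat \<Rightarrow> 'a \<Rightarrow> 'n cmat) \<Rightarrow> bool" where
  "normalized_family X \<longleftrightarrow> (\<forall>m. \<forall>u\<in>{1..d}. \<forall>s\<in>{1..N}.
     X u m s \<in> lax_filt m \<and> leading_part m (X u m s) = point_basis (u, s))"

lemma normalized_familyI:
  assumes "\<forall>u\<in>{1..d}. \<forall>s\<in>{1..N}. \<forall>m. X u m s \<in> lax"
    and "\<forall>u\<in>{1..d}. \<forall>s\<in>{1..N}. \<forall>m. \<forall>p\<in>{1..N}. ord_ge (zU p) (z p)
           (\<lambda>x. X u m s x - (if p = s then msc (z p x powi m) (Xb u) else 0)) (m + 1)"
  shows "normalized_family X"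
  unfolding normalized_family_def
proof (intro allI ballI)
  fix m u s assume "u \<in> {1..d}" "s \<in> {1..N}"
  then have "X u m s \<in> lax_filt m \<and> leading_part m (X u m s) = (\<lambda>p. if p = s then Xb u else 0)"
    using assms by (intro leading_part_of_normalized) auto
  then show "X u m s \<in> lax_filt m \<and> leading_part m (X u m s) = point_basis (u, s)"
    by (simp add: point_basis_Pair fun_eq_iff)
qed

lemma normalized_family_sum:
  assumes "normalized_family X" "F \<subseteq> {1..d} \<times> {1..N}"
  shows "(\<lambda>x. \<Sum>i\<in>F. msc (c i) ((\<lambda>(u, s). X u m s) i x)) \<in> lax_filt m \<and>
    leading_part m (\<lambda>x. \<Sum>i\<in>F. msc (c i) ((\<lambda>(u, s). X u m s) i x)) =
      (\<Sum>i\<in>F. fmsc (c i) (point_basis i))"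
proof -
  have F: "finite F" using assms(2) finite_subset by blast
  have X: "(\<lambda>(u, s). X u m s) i \<in> lax_filt m \<and> leading_part m ((\<lambda>(u, s). X u m s) i) = point_basis i"
    if "i \<in> F" for i
    using assms that unfolding normalized_family_def by auto
  then show ?thesis
    using leading_part_sum[OF F, of "\<lambda>(u, s). X u m s" m c] lax_filt_sum[OF F, of "\<lambda>(u, s). X u m s" m c]
    by simp
qed

end

lemma quot_basis_famD:
  assumes "quot_basis_fam V W I b"
  shows "\<And>i. i \<in> I \<Longrightarrow> b i \<in> V"
    and "\<And>F c. finite F \<Longrightarrow> F \<subseteq> I \<Longrightarrow> (\<lambda>x. \<Sum>i\<in>F. msc (c i) (b i x)) \<in> W \<Longrightarrow> \<forall>i\<in>F. c i = 0"
    and "\<And>L. L \<in> V \<Longrightarrow> \<exists>F c. finite F \<and> F \<subseteq> I \<and> (\<lambda>x. L x - (\<Sum>i\<in>F. msc (c i) (b i x))) \<in> W"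
  using assms unfolding quot_basis_fam_def by blast+

context lax_setting_basis
begin

lemma quot_basis_normalized:
  assumes "normalized_family X"
  shows "quot_basis_fam (lax_filt m) (lax_filt (m + 1)) ({1..d} \<times> {1..N}) (\<lambda>(u, s). X u m s)"
  unfolding quot_basis_fam_def
proof (intro conjI allI impI ballI)
  show "(\<lambda>(u, s). X u m s) i \<in> lax_filt m" if "i \<in> {1..d} \<times> {1..N}" for i
    using assms that unfolding normalized_family_def by auto
next
  fix F c i
  assume F: "finite F" "F \<subseteq> {1..d} \<times> {1..N}" and i: "i \<in> F"
    and succ: "(\<lambda>x. \<Sum>i\<in>F. msc (c i) ((\<lambda>(u, s). X u m s) i x)) \<in> lax_filt (m + 1)"
  note S = normalized_family_sum[OF assms F(2), of c m]
  have "(\<Sum>i\<in>F. fmsc (c i) (point_basis i)) = 0"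
    using lax_filt_succ_iff[OF conjunct1[OF S]] succ conjunct2[OF S] by simp
  then show "c i = 0" using point_basis_family_independent[OF F(2)] i by blast
next
  fix L assume L: "L \<in> lax_filt m"
  obtain C where C: "leading_part m L = (\<Sum>i\<in>{1..d} \<times> {1..N}. fmsc (C i) (point_basis i))"
    using leading_part_expansion[OF L] .
  let ?S = "\<lambda>x. \<Sum>i\<in>{1..d} \<times> {1..N}. msc (C i) ((\<lambda>(u, s). X u m s) i x)"
  have S: "?S \<in> lax_filt m" "leading_part m ?S = leading_part m L"
    using normalized_family_sum[OF assms order_refl, of C m] C by simp_all
  have "leading_part m (\<lambda>x. L x - ?S x) = 0"
    using leading_part_diff[OF L S(1)] S(2) by simp
  then have "(\<lambda>x. L x - ?S x) \<in> lax_filt (m + 1)"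
    using lax_filt_succ_iff[OF lax_filt_diff[OF L S(1)]] by simp
  then show "\<exists>F c. finite F \<and> F \<subseteq> {1..d} \<times> {1..N} \<and>
      (\<lambda>x. L x - (\<Sum>i\<in>F. msc (c i) ((\<lambda>(u, s). X u m s) i x))) \<in> lax_filt (m + 1)"
    by (intro exI[of _ "{1..d} \<times> {1..N}"] exI[of _ C] conjI) simp_all
qed

lemma quot_basis_leading_parts_independent:
  assumes B: "quot_basis_fam (lax_filt m) (lax_filt (m + 1)) B id"
    and F: "finite F" "F \<subseteq> B" and zero: "(\<Sum>i\<in>F. fmsc (c i) (leading_part m i)) = 0"
  shows "\<forall>i\<in>F. c i = 0"
proof -
  have mem: "\<forall>i\<in>F. i \<in> lax_filt m" using quot_basis_famD(1)[OF B] F(2) by auto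
  have "leading_part m (\<lambda>x. \<Sum>i\<in>F. msc (c i) (i x)) = 0"
    using leading_part_sum[OF F(1) mem, of c] zero by simp
  then have "(\<lambda>x. \<Sum>i\<in>F. msc (c i) (id i x)) \<in> lax_filt (m + 1)"
    using lax_filt_succ_iff[OF lax_filt_sum[OF F(1) mem, of c]] by simp
  then show ?thesis by (rule quot_basis_famD(2)[OF B F])
qed

lemma point_basis_in_span_leading_parts:
  assumes X: "normalized_family X" and B: "quot_basis_fam (lax_filt m) (lax_filt (m + 1)) B id"
  shows "point_basis ` ({1..d} \<times> {1..N}) \<subseteq> fam.span (leading_part m ` B)"
proof clarify
  fix u s assume us: "u \<in> {1..d}" "s \<in> {1..N}"
  then have XV: "X u m s \<in> lax_filt m" and XL: "leading_part m (X u m s) = point_basis (u, s)"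
    using X unfolding normalized_family_def by auto
  obtain F c where F: "finite F" "F \<subseteq> B"
    and succ: "(\<lambda>x. X u m s x - (\<Sum>i\<in>F. msc (c i) (id i x))) \<in> lax_filt (m + 1)"
    using quot_basis_famD(3)[OF B XV] by blast
  have mem: "\<forall>i\<in>F. i \<in> lax_filt m" using quot_basis_famD(1)[OF B] F(2) by auto
  note S = lax_filt_sum[OF F(1) mem, of c] leading_part_sum[OF F(1) mem, of c]
  have "leading_part m (\<lambda>x. X u m s x - (\<Sum>i\<in>F. msc (c i) (i x))) = 0"
    using succ lax_filt_succ_iff[OF lax_filt_diff[OF XV S(1)]] by simp
  then have "point_basis (u, s) = (\<Sum>i\<in>F. fmsc (c i) (leading_part m i))"
    using leading_part_diff[OF XV S(1)] S(2) XL by simp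
  also have "\<dots> \<in> fam.span (leading_part m ` B)"
    using F(2) by (intro fam.span_sum fam.span_scale fam.span_base) auto
  finally show "point_basis (u, s) \<in> fam.span (leading_part m ` B)" .
qed

lemma card_quot_basis:
  assumes X: "normalized_family X" and B: "quot_basis_fam (lax_filt m) (lax_filt (m + 1)) B id"
  shows "finite B \<and> card B = N * d"
proof -
  have inj: "inj_on (leading_part m) B"
    by (rule fam.inj_on_if_family_independent[OF quot_basis_leading_parts_independent[OF B]])
  have indep: "fam.independent (leading_part m ` B)"
    by (rule fam.independent_image_if_family_independent[OF quot_basis_leading_parts_independent[OF B]])
  have span_B: "leading_part m ` B \<subseteq> fam.span (point_basis ` ({1..d} \<times> {1..N}))"
  proof clarify
    fix L assume "L \<in> B"
    then have "L \<in> lax_filt m" using quot_basis_famD(1)[OF B] by simp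
    then obtain C where "leading_part m L = (\<Sum>i\<in>{1..d} \<times> {1..N}. fmsc (C i) (point_basis i))"
      by (rule leading_part_expansion)
    then show "leading_part m L \<in> fam.span (point_basis ` ({1..d} \<times> {1..N}))"
      by (simp add: fam.span_sum fam.span_scale fam.span_base)
  qed
  have le: "finite (leading_part m ` B) \<and> card (leading_part m ` B) \<le> card (point_basis ` ({1..d} \<times> {1..N}))"
    by (rule fam.independent_span_bound[OF _ indep span_B]) simp
  have ge: "card (point_basis ` ({1..d} \<times> {1..N})) \<le> card (leading_part m ` B)"
    using fam.independent_span_bound[OF conjunct1[OF le] independent_point_basis
        point_basis_in_span_leading_parts[OF X B]] by blast
  have "card (point_basis ` ({1..d} \<times> {1..N})) = N * d"
    using card_image[OF inj_on_point_basis] by (simp add: card_cartesian_product)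
  then show ?thesis
    using le ge card_image[OF inj] finite_image_iff[OF inj] by simp
qed

lemma normalized_families_congruent:
  assumes "normalized_family X" "normalized_family X'" "u \<in> {1..d}" "s \<in> {1..N}"
  shows "(\<lambda>x. X u m s x - X' u m s x) \<in> lax_filt (m + 1)"
proof -
  have XV: "X u m s \<in> lax_filt m" "X' u m s \<in> lax_filt m"
    and "leading_part m (X u m s) = leading_part m (X' u m s)"
    using assms unfolding normalized_family_def by auto
  then show ?thesis
    using lax_filt_succ_iff[OF lax_filt_diff[OF XV]] leading_part_diff[OF XV] by simp
qed

lemma leading_part_lowest_degree:
  assumes X: "normalized_family X" and F: "finite F" "F \<subseteq> {1..d} \<times> {1..N} \<times> {m0..}"
  shows "leading_part m0 (\<lambda>x. \<Sum>(u, s, m)\<in>F. msc (c (u, s, m)) (X u m s x)) =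
    (\<Sum>(u, s)\<in>{(u, s). (u, s, m0) \<in> F}. fmsc (c (u, s, m0)) (point_basis (u, s)))"
proof -
  define g where "g = (\<lambda>(u, s, m). X u m s)"
  have g: "g (u, s, m) \<in> lax_filt m \<and> leading_part m (g (u, s, m)) = point_basis (u, s)"
    if "(u, s, m) \<in> F" for u s m
    using X that F(2) unfolding normalized_family_def g_def by auto
  have mem: "\<forall>i\<in>F. g i \<in> lax_filt m0"
    using g F(2) lax_filt_mono by fastforce
  have lead: "leading_part m0 (g (u, s, m)) = (if m = m0 then point_basis (u, s) else 0)"
    if "(u, s, m) \<in> F" for u s m
  proof (cases "m = m0")
    case False
    then have "m0 + 1 \<le> m" using that F(2) by auto
    then have "g (u, s, m) \<in> lax_filt (m0 + 1)"
      using g[OF that] lax_filt_mono by blast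
    then show ?thesis using False lax_filt_succ_iff mem that by auto
  qed (use g[OF that] in simp)
  have "(\<lambda>x. \<Sum>(u, s, m)\<in>F. msc (c (u, s, m)) (X u m s x)) = (\<lambda>x. \<Sum>i\<in>F. msc (c i) (g i x))"
    by (simp add: g_def split_def)
  then have "leading_part m0 (\<lambda>x. \<Sum>(u, s, m)\<in>F. msc (c (u, s, m)) (X u m s x)) =
      (\<Sum>(u, s, m)\<in>F. if m = m0 then fmsc (c (u, s, m)) (point_basis (u, s)) else 0)"
    using leading_part_sum[OF F(1) mem, of c] lead by (auto intro!: sum.cong)
  also have "\<dots> = (\<Sum>i\<in>F. if snd (snd i) = m0 then fmsc (c i) (point_basis (fst i, fst (snd i))) else 0)"
    by (intro sum.cong) auto
  also have "\<dots> = (\<Sum>i\<in>{i \<in> F. snd (snd i) = m0}. fmsc (c i) (point_basis (fst i, fst (snd i))))"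
    by (rule sum.inter_filter[symmetric, OF F(1)])
  also have "{i \<in> F. snd (snd i) = m0} = (\<lambda>(u, s). (u, s, m0)) ` {(u, s). (u, s, m0) \<in> F}"
    by force
  also have "(\<Sum>i\<in>\<dots>. fmsc (c i) (point_basis (fst i, fst (snd i)))) =
      (\<Sum>(u, s)\<in>{(u, s). (u, s, m0) \<in> F}. fmsc (c (u, s, m0)) (point_basis (u, s)))"
    by (subst sum.reindex) (auto simp: inj_on_def split_def)
  finally show ?thesis .
qed

lemma normalized_family_independent:
  assumes X: "normalized_family X"
    and F: "finite F" "F \<subseteq> {1..d} \<times> {1..N} \<times> (UNIV :: int set)"
    and zero: "(\<lambda>x. \<Sum>(u, s, m)\<in>F. msc (c (u, s, m)) (X u m s x)) = (\<lambda>x. 0)"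
  shows "\<forall>i\<in>F. c i = 0"
proof (rule ccontr)
  define F' where "F' = {i \<in> F. c i \<noteq> 0}"
  assume "\<not> (\<forall>i\<in>F. c i = 0)"
  then have "F' \<noteq> {}" by (auto simp: F'_def)
  have "finite F'" using F(1) by (simp add: F'_def)
  define m0 where "m0 = Min ((\<lambda>(u, s, m). m) ` F')"
  have "m0 \<in> (\<lambda>(u, s, m). m) ` F'"
    unfolding m0_def using \<open>finite F'\<close> \<open>F' \<noteq> {}\<close> by (intro Min_in) auto
  then obtain u0 s0 where i0: "(u0, s0, m0) \<in> F'" by auto
  have "m0 \<le> m" if "(u, s, m) \<in> F'" for u s m
    unfolding m0_def using \<open>finite F'\<close> that by (intro Min_le) force+
  then have F'_sub: "F' \<subseteq> {1..d} \<times> {1..N} \<times> {m0..}"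
    using F(2) by (auto simp: F'_def)
  have "(\<lambda>x. \<Sum>(u, s, m)\<in>F'. msc (c (u, s, m)) (X u m s x)) = (\<lambda>x. 0)"
  proof -
    have "(\<Sum>(u, s, m)\<in>F'. msc (c (u, s, m)) (X u m s x)) = (\<Sum>(u, s, m)\<in>F. msc (c (u, s, m)) (X u m s x))"
      for x by (rule sum.mono_neutral_left[OF F(1)]) (auto simp: F'_def)
    then show ?thesis using zero by (simp add: fun_eq_iff)
  qed
  moreover have "leading_part m0 (\<lambda>x. 0) = 0"
    using lax_filt_succ_iff[OF lax_filt_zero] lax_filt_zero by blast
  ultimately have "(\<Sum>(u, s)\<in>{(u, s). (u, s, m0) \<in> F'}. fmsc (c (u, s, m0)) (point_basis (u, s))) = 0"
    using leading_part_lowest_degree[OF X \<open>finite F'\<close> F'_sub, of c] by simp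
  moreover have "{(u, s). (u, s, m0) \<in> F'} \<subseteq> {1..d} \<times> {1..N}"
    using F'_sub by auto
  ultimately have "\<forall>i\<in>{(u, s). (u, s, m0) \<in> F'}. c (fst i, snd i, m0) = 0"
    using point_basis_family_independent[of _ "\<lambda>i. c (fst i, snd i, m0)"] by (simp add: split_def)
  then show False using i0 by (auto simp: F'_def)
qed

end
theorem proposition3p10:
  fixes atlas :: "('a::t2_space set \<times> ('a \<Rightarrow> complex)) set"
    and kind :: "'n::finite liekind"
    and N M K d :: nat
    and P Q \<gamma> :: "nat \<Rightarrow> 'a"
    and zU wU :: "nat \<Rightarrow> 'a set" and z w :: "nat \<Rightarrow> 'a \<Rightarrow> complex"
    and \<alpha> :: "nat \<Rightarrow> complex^'n"
    and Xb :: "nat \<Rightarrow> 'n cmat"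
    and X :: "nat \<Rightarrow> int \<Rightarrow> nat \<Rightarrow> 'a \<Rightarrow> 'n cmat"
  defines "A \<equiv> P ` {1..N} \<union> Q ` {1..M}"
  defines "G \<equiv> lax_alg atlas kind A K \<gamma> wU w \<alpha>"
  assumes RS: "compact_riemann_surface atlas"
    and N_pos: "N \<ge> 1" and M_pos: "M \<ge> 1"
    and P_inj: "inj_on P {1..N}" and Q_inj: "inj_on Q {1..M}"
    and PQ_disj: "P ` {1..N} \<inter> Q ` {1..M} = {}"
    and \<gamma>_inj: "inj_on \<gamma> {1..K}" and \<gamma>_A: "\<gamma> ` {1..K} \<inter> A = {}"
    and z_coord: "\<forall>p\<in>{1..N}. local_coord atlas (zU p) (z p) (P p)"
    and w_coord: "\<forall>s\<in>{1..K}. local_coord atlas (wU s) (w s) (\<gamma> s)"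
    and SO_iso: "kind = SO \<longrightarrow> (\<forall>s\<in>{1..K}. bil (\<alpha> s) (\<alpha> s) = 0)"
    and SP_form: "\<forall>\<sigma>. kind = SP \<sigma> \<longrightarrow> transpose \<sigma> = - \<sigma> \<and> invertible \<sigma>"
    and basis_in: "\<forall>u\<in>{1..d}. Xb u \<in> lie_alg kind"
    and basis_indep: "\<forall>c. (\<Sum>u\<in>{1..d}. msc (c u) (Xb u)) = 0 \<longrightarrow> (\<forall>u\<in>{1..d}. c u = 0)"
    and basis_span: "\<forall>Y\<in>lie_alg kind. \<exists>c. Y = (\<Sum>u\<in>{1..d}. msc (c u) (Xb u))"
    and X_in: "\<forall>u\<in>{1..d}. \<forall>s\<in>{1..N}. \<forall>m. X u m s \<in> G"
    and X_norm: "\<forall>u\<in>{1..d}. \<forall>s\<in>{1..N}. \<forall>m. \<forall>p\<in>{1..N}.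
        ord_ge (zU p) (z p)
          (\<lambda>x. X u m s x - (if p = s then msc ((z p x) powi m) (Xb u) else 0)) (m + 1)"
  shows
    "(\<forall>F c. finite F \<longrightarrow> F \<subseteq> {1..d} \<times> {1..N} \<times> (UNIV :: int set) \<longrightarrow>
        (\<lambda>x. \<Sum>(u,s,m)\<in>F. msc (c (u,s,m)) (X u m s x)) = (\<lambda>x. 0) \<longrightarrow>
        (\<forall>i\<in>F. c i = 0))
   \<and> (\<forall>m. quot_basis_fam (filt G N zU z m) (filt G N zU z (m + 1))
            ({1..d} \<times> {1..N}) (\<lambda>(u,s). X u m s))
   \<and> (\<forall>m. \<forall>B. quot_basis_fam (filt G N zU z m) (filt G N zU z (m + 1)) B id
            \<longrightarrow> finite B \<and> card B = N * d)
   \<and> (\<forall>X'. (\<forall>u\<in>{1..d}. \<forall>s\<in>{1..N}. \<forall>m. X' u m s \<in> G) \<longrightarrow>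
          (\<forall>u\<in>{1..d}. \<forall>s\<in>{1..N}. \<forall>m. \<forall>p\<in>{1..N}.
             ord_ge (zU p) (z p)
               (\<lambda>x. X' u m s x - (if p = s then msc ((z p x) powi m) (Xb u) else 0)) (m + 1)) \<longrightarrow>
          (\<forall>u\<in>{1..d}. \<forall>s\<in>{1..N}. \<forall>m. (\<lambda>x. X u m s x - X' u m s x) \<in> filt G N zU z (m + 1)))"
proof -
  interpret lax_setting_basis atlas kind A K \<gamma> wU w \<alpha> N zU z d Xb
    using RS w_coord z_coord basis_indep basis_span
    by unfold_locales (auto simp: A_def compact_riemann_surface_def intro: local_coord_ball)
  have X: "normalized_family X"
    using X_in X_norm unfolding G_def by (rule normalized_familyI)
  have X': "normalized_family X'"
    if "\<forall>u\<in>{1..d}. \<forall>s\<in>{1..N}. \<forall>m. X' u m s \<in> G"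
      and "\<forall>u\<in>{1..d}. \<forall>s\<in>{1..N}. \<forall>m. \<forall>p\<in>{1..N}. ord_ge (zU p) (z p)
             (\<lambda>x. X' u m s x - (if p = s then msc ((z p x) powi m) (Xb u) else 0)) (m + 1)"
    for X'
    using that unfolding G_def by (rule normalized_familyI)
  show ?thesis
  proof (intro conjI allI impI ballI)
    show "c i = 0" if "finite F" "F \<subseteq> {1..d} \<times> {1..N} \<times> (UNIV :: int set)"
      "(\<lambda>x. \<Sum>(u, s, m)\<in>F. msc (c (u, s, m)) (X u m s x)) = (\<lambda>x. 0)" "i \<in> F" for F c i
      using normalized_family_independent[OF X that(1-3)] that(4) by blast
    show "quot_basis_fam (filt G N zU z m) (filt G N zU z (m + 1)) ({1..d} \<times> {1..N})
        (\<lambda>(u, s). X u m s)" for m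
      unfolding G_def by (rule quot_basis_normalized[OF X])
  qed (use X' in \<open>auto simp: G_def card_quot_basis[OF X] intro: normalized_families_congruent[OF X]\<close>)
qed

end
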